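(* Let $n \in \mathbb{N}$ with $n \geq 7$ and let $\delta_1, \dots, \delta_{2^n} \in [-1,1]$ satisfy $\delta_1 + \delta_2 + \cdots + \delta_{2^n} \leq 1$. Then there exists an interval $I$ in $\mathbb{N}$ such that $I \subset [1, 2^n]$, $|I| \geq n$, and $$\max_{\min I \leq k \leq \max I} \ \sum_{j=k}^{\max I} \delta_j \leq 1.$$
   Context: An interval in $\mathbb{N}$ is a set of the form $[m,n] \cap \mathbb{N}$ with $m,n \in \mathbb{N}$, $m \le n$; $|I|$ denotes its cardinality. *)

theory Defs
  imports Complex_Main
begin

definition nat_interval :: "nat set \<Rightarrow> bool" where
  "nat_interval I \<longleftrightarrow> (\<exists>m n. m \<le> n \<and> I = {m..n})"

end

theory Submission
  imports Defs
begin

text \<open>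
  Let \<open>T b = \<delta>\<^sub>1 + \<dots> + \<delta>\<^sub>b\<close>. The suffix sums of the window \<open>[b-n+1, b]\<close> are \<open>T b - T i\<close> for
  \<open>b - n \<le> i < b\<close>, so if no window qualifies, then for every \<open>b \<ge> n\<close> some \<open>T i\<close> with
  \<open>b - n \<le> i < b\<close> is smaller than \<open>T b - 1\<close>. Descending along such steps from \<open>2\<^sup>n\<close> and
  using \<open>T b \<ge> -b\<close> once below \<open>n\<close> gives \<open>T (2\<^sup>n) > 2\<^sup>n div n - n \<ge> 1\<close>, since \<open>n (n+1) \<le> 2\<^sup>n\<close>
  for \<open>n \<ge> 7\<close>; this contradicts the hypothesis on the total sum.
\<close>

lemma nat_interval_atLeastAtMost: "m \<le> n \<Longrightarrow> nat_interval {m..n}"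
  unfolding nat_interval_def by blast

lemma mult_Suc_le_two_power: "7 \<le> n \<Longrightarrow> n * Suc n \<le> (2::nat) ^ n"
proof (induction n rule: dec_induct)
  case base
  then show ?case by simp
next
  case (step m)
  have "Suc m * Suc (Suc m) = m * Suc m + 2 * Suc m" by simp
  also have "\<dots> \<le> 2 * (m * Suc m)" using mult_le_mono1[of 2 m "Suc m"] step(1) by simp
  also have "\<dots> \<le> 2 ^ Suc m" using step(3) by simp
  finally show ?case .
qed

lemma sum_atLeastAtMost_eq_prefix_diff:
  fixes f :: "nat \<Rightarrow> 'a::ab_group_add"
  assumes "1 \<le> k" "k \<le> Suc b"
  shows "(\<Sum>j=k..b. f j) = (\<Sum>j=1..b. f j) - (\<Sum>j=1..k-1. f j)"
proof -
  have "{1..b} = {1..k-1} \<union> {k..b}" using assms by auto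
  then have "(\<Sum>j=1..b. f j) = (\<Sum>j=1..k-1. f j) + (\<Sum>j=k..b. f j)"
    by (simp add: sum.union_disjoint ivl_disj_int_two(8))
  then show ?thesis by (simp add: algebra_simps)
qed

lemma lower_bound_by_descent:
  fixes S :: "nat \<Rightarrow> real"
  assumes "0 < n"
    and start: "\<And>b. b < n \<Longrightarrow> - real b \<le> S b"
    and descent: "\<And>b. n \<le> b \<Longrightarrow> b \<le> N \<Longrightarrow> \<exists>i\<in>{b-n..<b}. S i + 1 < S b"
    and "b \<le> N"
  shows "real (b div n) - real n < S b"
  using \<open>b \<le> N\<close>
proof (induction b rule: less_induct)
  case (less b)
  show ?case
  proof (cases "b < n")
    case True
    then show ?thesis using start[of b] by simp
  next
    case False
    then obtain i where i: "b - n \<le> i" "i < b" "S i + 1 < S b"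
      using descent[of b] False less.prems by (force simp: not_less)
    have "real (i div n) - real n < S i" using less.IH i(2) less.prems by simp
    moreover have "b div n \<le> Suc (i div n)"
      using div_le_mono[of b "i + n" n] i(1) \<open>0 < n\<close> by simp
    ultimately show ?thesis using i(3) by linarith
  qed
qed

lemma exists_window_with_bounded_suffix_sums:
  fixes \<delta> :: "nat \<Rightarrow> real"
  assumes "0 < n" "n * Suc n \<le> N"
    and lower: "\<And>j. j \<in> {1..N} \<Longrightarrow> -1 \<le> \<delta> j"
    and total: "(\<Sum>j=1..N. \<delta> j) \<le> 1"
  shows "\<exists>b. n \<le> b \<and> b \<le> N \<and> (\<forall>k\<in>{b-n+1..b}. (\<Sum>j=k..b. \<delta> j) \<le> 1)"
proof (rule ccontr)
  assume no_window: "\<not> ?thesis"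
  define T where "T b = (\<Sum>j=1..b. \<delta> j)" for b
  have start: "- real b \<le> T b" if "b < n" for b
  proof -
    have "n \<le> n * Suc n" by simp
    then have "b \<le> N" using that assms(2) by linarith
    then have "(\<Sum>j=1..b. -1) \<le> T b" unfolding T_def by (intro sum_mono lower) auto
    then show ?thesis by simp
  qed
  have descent: "\<exists>i\<in>{b-n..<b}. T i + 1 < T b" if "n \<le> b" "b \<le> N" for b
  proof -
    have "\<exists>k\<in>{b-n+1..b}. 1 < (\<Sum>j=k..b. \<delta> j)"
      using no_window that not_le by blast
    then obtain k where k: "k \<in> {b-n+1..b}" "1 < (\<Sum>j=k..b. \<delta> j)" by blast
    then have "(\<Sum>j=k..b. \<delta> j) = T b - T (k-1)"
      unfolding T_def by (intro sum_atLeastAtMost_eq_prefix_diff) auto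
    then show ?thesis using k by (intro bexI[of _ "k-1"]) auto
  qed
  have "real (N div n) - real n < T N"
    using lower_bound_by_descent[OF \<open>0 < n\<close> start descent] by blast
  moreover have "Suc n \<le> N div n"
    using assms(1,2) by (metis div_le_mono nonzero_mult_div_cancel_left not_gr0)
  moreover have "T N \<le> 1" using total by (simp add: T_def)
  ultimately show False by linarith
qed

theorem mainTheorem5:
  fixes n :: nat and \<delta> :: "nat \<Rightarrow> real"
  assumes "n \<ge> 7"
    and "\<forall>i\<in>{1..2^n}. -1 \<le> \<delta> i \<and> \<delta> i \<le> 1"
    and "(\<Sum>i=1..2^n. \<delta> i) \<le> 1"
  shows "\<exists>I. nat_interval I \<and> I \<subseteq> {1..2^n} \<and> card I \<ge> n \<and>
           (\<forall>k\<in>{Min I..Max I}. (\<Sum>j=k..Max I. \<delta> j) \<le> 1)"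
proof -
  have "0 < n" using assms(1) by simp
  obtain b where b: "n \<le> b" "b \<le> 2^n" and suffix: "\<forall>k\<in>{b-n+1..b}. (\<Sum>j=k..b. \<delta> j) \<le> 1"
    using exists_window_with_bounded_suffix_sums[OF \<open>0 < n\<close> mult_Suc_le_two_power[OF assms(1)]]
      assms(2,3) by blast
  define I where "I = {b-n+1..b}"
  have "Min I = b-n+1" "Max I = b"
    unfolding I_def using \<open>0 < n\<close> b(1) by (auto simp: Min_eq_iff Max_eq_iff)
  moreover have "nat_interval I" "I \<subseteq> {1..2^n}" "card I \<ge> n"
    unfolding I_def using \<open>0 < n\<close> b by (auto intro: nat_interval_atLeastAtMost)
  ultimately show ?thesis using suffix by (metis I_def)
qed

end
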